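(* Let $\xi$ be the random potential defined in the context. There is a constant $c_0>0$ such that $\mathbb{P}$-a.s. there exists a (random) increasing sequence $(x_n)_{n\in\mathbb{N}}$ of reals tending to infinity such that for all $n$ $$\xi(x)=\mathsf{ei}\ \ \forall x\in[x_n-2c_0\ln n,\,x_n],\qquad \xi(x)=\mathsf{es}\ \ \forall x\in[x_n+2,\,x_n+2c_0\ln n-2],$$ and $\xi$ is non-decreasing on $[x_n-2c_0\ln n,\,x_n+2c_0\ln n-2]$. Moreover, $\mathbb{P}$-a.s., $$1\le\liminf_{n\to\infty}\frac{x_n}{n}\le\limsup_{n\to\infty}\frac{x_n}{n}\le2.$$
   Context: Fix constants $0<\mathsf{ei}<\mathsf{es}<\infty$ with $\mathsf{es}/\mathsf{ei}>2$. Let $\chi:[0,\infty)\to[0,1]$ be continuous and non-increasing with $\chi(x)=1$ for $x\le1$ and $\chi(x)=0$ for $x\ge2$, and let $\omega=(\omega^i)_{i\in\mathbb{Z}}$ be a Poisson point process on $\mathbb{R}$ with intensity $1$ on $(\Omega,\mathcal F,\mathbb P)$. Define $\xi(x):=\mathsf{ei}+(\mathsf{es}-\mathsf{ei})\sup\{\chi(|x-\omega^i|):i\in\mathbb{Z}\}$, $x\in\mathbb{R}$. *)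

theory Defs
  imports "HOL-Probability.Probability"
begin

text \<open>A Poisson point process on the real line with intensity 1 (Lebesgue measure),
  on a probability space M, represented by its random set of points N \<omega> \<subseteq> \<real>.\<close>

definition poisson_point_process :: "'a measure \<Rightarrow> ('a \<Rightarrow> real set) \<Rightarrow> bool" where
  "poisson_point_process M N \<longleftrightarrow>
     prob_space M \<and>
     (\<forall>\<omega>\<in>space M. \<forall>a b. finite (N \<omega> \<inter> {a..b})) \<and>
     (\<forall>A. A \<in> sets lborel \<and> bounded A \<longrightarrow>
        (\<lambda>\<omega>. card (N \<omega> \<inter> A)) \<in> measurable M (count_space UNIV) \<and>
        (\<forall>k::nat. measure M {\<omega>\<in>space M. card (N \<omega> \<inter> A) = k}
                  = (measure lborel A) ^ k / fact k * exp (- measure lborel A))) \<and>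
     (\<forall>(I::nat set) (A::nat \<Rightarrow> real set). finite I \<longrightarrow>
        (\<forall>i\<in>I. A i \<in> sets lborel \<and> bounded (A i)) \<longrightarrow>
        disjoint_family_on A I \<longrightarrow>
        prob_space.indep_vars M (\<lambda>_. count_space UNIV) (\<lambda>i \<omega>. card (N \<omega> \<inter> A i)) I)"

definition potential :: "real \<Rightarrow> real \<Rightarrow> (real \<Rightarrow> real) \<Rightarrow> real set \<Rightarrow> real \<Rightarrow> real" where
  "potential ei es chi P x = ei + (es - ei) * Sup ((\<lambda>p. chi \<bar>x - p\<bar>) ` P)"

end

theory Submission
  imports Defs "HOL-Real_Asymp.Real_Asymp" "HOL-Library.Discrete_Functions"
begin

(*
  At scale k the window [3k^2/2, 3k^2/2 + k) is cut into about k / ln k blocks of 2L + 5 unit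
  cells, L ~ ln k / 4. A block is good if its first L + 5 cells are empty and its last L cells
  are occupied; by independence of Poisson counts on disjoint cells this has probability at least
  e^-(2L+5) ~ k^-1/2, so all blocks of the window fail with probability exp (-c sqrt k / ln k),
  which is summable, and by Borel-Cantelli almost surely every large scale has a good block.
  Just left of the first point p of the occupied stretch, every point is at distance at least 2
  from [p - 3 - L, p - 2], so the potential equals ei there; the occupied cells put a point within
  distance 1 of every site of [p - 1, p + L - 4], so it equals es there; and in between only points
  to the right matter, each contributing a non-decreasing bump.
  For n take the scale k = floor (sqrt n): its window lies in [n, 2n] and L_k >= ln n / 8, so
  c0 = 1/16 works; x_n = p - 2 - 1/(n + 1) stays strictly increasing while n remains at one scale.
*)

definition step_profile :: "(real \<Rightarrow> real) \<Rightarrow> real \<Rightarrow> real \<Rightarrow> real \<Rightarrow> real \<Rightarrow> bool" where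
  "step_profile f low high x l \<longleftrightarrow>
     (\<forall>z\<in>{x - l..x}. f z = low) \<and> (\<forall>z\<in>{x + 2..x + l - 2}. f z = high) \<and>
     mono_on {x - l..x + l - 2} f"

locale cutoff =
  fixes ei es :: real and chi :: "real \<Rightarrow> real"
  assumes ei_less_es: "ei < es"
    and chi_range: "\<And>x. 0 \<le> x \<Longrightarrow> chi x \<in> {0..1}"
    and chi_antimono: "\<And>x y. 0 \<le> x \<Longrightarrow> x \<le> y \<Longrightarrow> chi y \<le> chi x"
    and chi_one: "\<And>x. 0 \<le> x \<Longrightarrow> x \<le> 1 \<Longrightarrow> chi x = 1"
    and chi_zero: "\<And>x. 2 \<le> x \<Longrightarrow> chi x = 0"
begin

lemma potential_eq_ei:
  assumes "P \<noteq> {}" and "\<And>q. q \<in> P \<Longrightarrow> 2 \<le> \<bar>z - q\<bar>"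
  shows "potential ei es chi P z = ei"
proof -
  have "(\<lambda>q. chi \<bar>z - q\<bar>) ` P = {0}"
    using assms chi_zero by auto
  then show ?thesis
    unfolding potential_def by simp
qed

lemma potential_eq_es:
  assumes "q \<in> P" and "\<bar>z - q\<bar> \<le> 1"
  shows "potential ei es chi P z = es"
proof -
  have "Sup ((\<lambda>q. chi \<bar>z - q\<bar>) ` P) = 1"
  proof (rule cSup_eq_maximum)
    show "1 \<in> (\<lambda>q. chi \<bar>z - q\<bar>) ` P"
      using assms chi_one[of "\<bar>z - q\<bar>"] by force
    show "y \<le> 1" if "y \<in> (\<lambda>q. chi \<bar>z - q\<bar>) ` P" for y
      using that chi_range by fastforce
  qed
  then show ?thesis
    unfolding potential_def by simp
qed

lemma potential_le_es:
  assumes "P \<noteq> {}"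
  shows "potential ei es chi P z \<le> es"
proof -
  have "Sup ((\<lambda>q. chi \<bar>z - q\<bar>) ` P) \<le> 1"
    using assms chi_range by (intro cSup_least) fastforce+
  then have "(es - ei) * Sup ((\<lambda>q. chi \<bar>z - q\<bar>) ` P) \<le> es - ei"
    using ei_less_es mult_left_mono[of _ 1 "es - ei"] by simp
  then show ?thesis
    unfolding potential_def by simp
qed

lemma potential_mono:
  assumes "P \<noteq> {}" and "\<And>q. q \<in> P \<Longrightarrow> chi \<bar>z1 - q\<bar> \<le> chi \<bar>z2 - q\<bar>"
  shows "potential ei es chi P z1 \<le> potential ei es chi P z2"
proof -
  have "bdd_above ((\<lambda>q. chi \<bar>z2 - q\<bar>) ` P)"
    using chi_range by (intro bdd_aboveI[of _ 1]) fastforce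
  then have "Sup ((\<lambda>q. chi \<bar>z1 - q\<bar>) ` P) \<le> Sup ((\<lambda>q. chi \<bar>z2 - q\<bar>) ` P)"
    using assms by (intro cSup_mono) auto
  then show ?thesis
    unfolding potential_def using ei_less_es by (simp add: mult_left_mono)
qed

lemma step_profile_potential:
  assumes "P \<noteq> {}" and gap: "P \<inter> {x - l - 2<..<x + 2} = {}"
    and dense: "\<And>z. z \<in> {x + 2..x + l - 2} \<Longrightarrow> \<exists>q\<in>P. \<bar>z - q\<bar> \<le> 1"
  shows "step_profile (potential ei es chi P) ei es x l"
proof -
  have outside: "q \<le> x - l - 2 \<or> x + 2 \<le> q" if "q \<in> P" for q
    using gap that by fastforce
  have low: "potential ei es chi P z = ei" if "z \<in> {x - l..x}" for z
    using assms(1) by (rule potential_eq_ei) (use outside that in fastforce)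
  have high: "potential ei es chi P z = es" if "z \<in> {x + 2..x + l - 2}" for z
    using dense[OF that] potential_eq_es by blast
  have "potential ei es chi P z1 \<le> potential ei es chi P z2"
    if z: "z1 \<in> {x - l..x + l - 2}" "z2 \<in> {x - l..x + l - 2}" "z1 \<le> z2" for z1 z2
  proof (cases "x + 2 \<le> z2")
    case True
    then show ?thesis
      using high[of z2] z potential_le_es[OF assms(1)] by simp
  next
    case False
    show ?thesis
    proof (rule potential_mono[OF assms(1)])
      fix q assume "q \<in> P"
      then consider "q \<le> x - l - 2" | "x + 2 \<le> q"
        using outside by blast
      then show "chi \<bar>z1 - q\<bar> \<le> chi \<bar>z2 - q\<bar>"
      proof cases
        case 1
        then have "chi \<bar>z1 - q\<bar> = 0"
          using z by (intro chi_zero) (auto simp: abs_if)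
        then show ?thesis
          using chi_range[of "\<bar>z2 - q\<bar>"] by simp
      next
        case 2
        then show ?thesis
          using False z chi_antimono[of "q - z2" "q - z1"] by simp
      qed
    qed
  qed
  then show ?thesis
    unfolding step_profile_def using low high by (auto intro: mono_onI)
qed

end

definition unit_cell :: "real \<Rightarrow> nat \<Rightarrow> real set" where
  "unit_cell a i = {a + real i ..< a + real i + 1}"

lemma unit_cell_shift: "unit_cell a (i + m) = unit_cell (a + real i) m"
  by (simp add: unit_cell_def algebra_simps)

lemma disjoint_family_unit_cell: "disjoint_family (unit_cell a)"
proof -
  have "unit_cell a i \<inter> unit_cell a j = {}" if "i < j" for i j
    using that by (auto simp: unit_cell_def)
  then show ?thesis
    unfolding disjoint_family_on_def by (metis inf_commute nat_neq_iff)
qed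

definition good_block :: "nat \<Rightarrow> real \<Rightarrow> real set \<Rightarrow> bool" where
  "good_block L b P \<longleftrightarrow> (\<forall>m<2 * L + 5. P \<inter> unit_cell b m = {} \<longleftrightarrow> m < L + 5)"

lemma mem_unit_cell_floor:
  assumes "b \<le> z"
  shows "z \<in> unit_cell b (nat \<lfloor>z - b\<rfloor>)"
  using assms unfolding unit_cell_def by simp linarith

lemma good_block_gap:
  assumes "good_block L b P"
  shows "P \<inter> {b..<b + L + 5} = {}"
proof -
  have "q \<notin> P" if "b \<le> q" "q < b + L + 5" for q
  proof -
    have "nat \<lfloor>q - b\<rfloor> < L + 5"
      using that by linarith
    then have "P \<inter> unit_cell b (nat \<lfloor>q - b\<rfloor>) = {}"
      using assms unfolding good_block_def by simp
    then show ?thesis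
      using mem_unit_cell_floor[OF \<open>b \<le> q\<close>] by blast
  qed
  then show ?thesis by auto
qed

lemma good_block_dense:
  assumes "good_block L b P" and "b + L + 5 \<le> z" and "z < b + 2 * L + 5"
  shows "\<exists>q\<in>P. \<bar>z - q\<bar> \<le> 1"
proof -
  define m where "m = nat \<lfloor>z - b\<rfloor>"
  have "L + 5 \<le> m" "m < 2 * L + 5"
    using assms(2,3) unfolding m_def by linarith+
  then have "P \<inter> unit_cell b m \<noteq> {}"
    using assms(1) unfolding good_block_def by simp
  then obtain q where "q \<in> P" "q \<in> unit_cell b m"
    by blast
  moreover have "z \<in> unit_cell b m"
    unfolding m_def using assms(2) by (intro mem_unit_cell_floor) simp
  ultimately show ?thesis
    by (intro bexI[of _ q]) (auto simp: unit_cell_def abs_le_iff)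
qed

lemma good_block_first_point:
  assumes good: "good_block L b P" and L: "1 \<le> L" and fin: "finite (P \<inter> unit_cell b (L + 5))"
  obtains p where "p \<in> P" "b + L + 5 \<le> p" "p < b + L + 6" "\<And>q. q \<in> P \<Longrightarrow> b \<le> q \<Longrightarrow> p \<le> q"
proof -
  let ?C = "P \<inter> unit_cell b (L + 5)"
  have "?C \<noteq> {}"
    using good L unfolding good_block_def by auto
  define p where "p = Min ?C"
  have p: "p \<in> P" "b + L + 5 \<le> p" "p < b + L + 6"
    using Min_in[OF fin \<open>?C \<noteq> {}\<close>] unfolding p_def unit_cell_def by auto
  have "p \<le> q" if "q \<in> P" "b \<le> q" for q
  proof -
    have "b + L + 5 \<le> q"
      using good_block_gap[OF good] that by force
    moreover have "p \<le> q" if "q < b + L + 6"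
      using Min_le[OF fin] \<open>q \<in> P\<close> \<open>b + L + 5 \<le> q\<close> that unfolding p_def by (simp add: unit_cell_def)
    ultimately show ?thesis
      using p(3) by linarith
  qed
  with p that show ?thesis
    by blast
qed

lemma (in cutoff) good_block_step_profile:
  assumes good: "good_block L b P" and L: "1 \<le> L" and fin: "finite (P \<inter> unit_cell b (L + 5))"
  obtains p where "b + L + 5 \<le> p" "p < b + L + 6"
    "\<And>x l. p - 3 \<le> x \<Longrightarrow> x \<le> p - 2 \<Longrightarrow> l \<le> real L \<Longrightarrow> step_profile (potential ei es chi P) ei es x l"
proof -
  obtain p where p: "p \<in> P" "b + L + 5 \<le> p" "p < b + L + 6" and first: "\<And>q. q \<in> P \<Longrightarrow> b \<le> q \<Longrightarrow> p \<le> q"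
    using good_block_first_point[OF good L fin] by blast
  have "step_profile (potential ei es chi P) ei es x l"
    if x: "p - 3 \<le> x" "x \<le> p - 2" and l: "l \<le> real L" for x l
  proof (rule step_profile_potential)
    show "P \<noteq> {}"
      using p by blast
    have "q \<notin> P" if "x - l - 2 < q" "q < x + 2" for q
      using first[of q] that x l p(2) by linarith
    then show "P \<inter> {x - l - 2<..<x + 2} = {}"
      by auto
    fix z assume z: "z \<in> {x + 2..x + l - 2}"
    show "\<exists>q\<in>P. \<bar>z - q\<bar> \<le> 1"
    proof (cases "z \<le> p")
      case True
      then show ?thesis
        using p(1) z x by (intro bexI[of _ p]) auto
    next
      case False
      then show ?thesis
        using good_block_dense[OF good, of z] p z x l by simp
    qed
  qed
  then show ?thesis
    using that p by blast
qed

lemma (in prob_space) prob_none_of_indep_events_le: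
  assumes indep: "indep_events A I" and fin: "finite I" and q: "\<And>i. i \<in> I \<Longrightarrow> q \<le> prob (A i)"
  shows "prob (space M - (\<Union>i\<in>I. A i)) \<le> exp (- (real (card I) * q))"
proof (cases "I = {}")
  case True
  then show ?thesis by simp
next
  case False
  have events: "A i \<in> events" if "i \<in> I" for i
    using indep that by (auto simp: indep_events_def)
  have "indep_sets (\<lambda>i. sigma_sets (space M) {A i}) I"
    using indep unfolding indep_events_def_alt
    by (rule indep_sets_sigma) (auto simp: Int_stable_def)
  then have "prob (\<Inter>i\<in>I. space M - A i) = (\<Prod>i\<in>I. prob (space M - A i))"
    by (rule indep_setsD) (use fin False in \<open>auto intro: sigma_sets.Compl sigma_sets.Basic\<close>)
  also have "\<dots> \<le> (\<Prod>i\<in>I. exp (- q))"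
  proof (rule prod_mono)
    fix i assume "i \<in> I"
    have "prob (space M - A i) = 1 - prob (A i)"
      using events[OF \<open>i \<in> I\<close>] by (rule prob_compl)
    also have "\<dots> \<le> 1 + (- q)"
      using q[OF \<open>i \<in> I\<close>] by simp
    also have "\<dots> \<le> exp (- q)"
      by (rule exp_ge_add_one_self)
    finally show "0 \<le> prob (space M - A i) \<and> prob (space M - A i) \<le> exp (- q)"
      by simp
  qed
  also have "\<dots> = exp (- (real (card I) * q))"
    by (simp add: exp_of_nat_mult[symmetric])
  also have "(\<Inter>i\<in>I. space M - A i) = space M - (\<Union>i\<in>I. A i)"
    using False by blast
  finally show ?thesis .
qed

lemma ball_atLeastLessThan_add: "(\<forall>i\<in>{c..<c + n}. Q i) \<longleftrightarrow> (\<forall>m<n. Q (c + m))"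
  for c n :: nat
  by (auto simp: le_iff_add)

locale poisson_process = prob_space M for M :: "'a measure" +
  fixes N :: "'a \<Rightarrow> real set"
  assumes poisson: "poisson_point_process M N"
begin

lemma locally_finite: "\<omega> \<in> space M \<Longrightarrow> finite (N \<omega> \<inter> {a..b})"
  using poisson unfolding poisson_point_process_def by (elim conjE) simp

lemma count_measurable:
  "A \<in> sets lborel \<Longrightarrow> bounded A \<Longrightarrow> (\<lambda>\<omega>. card (N \<omega> \<inter> A)) \<in> measurable M (count_space UNIV)"
  using poisson unfolding poisson_point_process_def by (elim conjE) simp

lemma prob_count:
  "A \<in> sets lborel \<Longrightarrow> bounded A \<Longrightarrow>
     prob {\<omega>\<in>space M. card (N \<omega> \<inter> A) = k} = measure lborel A ^ k / fact k * exp (- measure lborel A)"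
  using poisson unfolding poisson_point_process_def by (elim conjE) simp

lemma indep_counts:
  fixes A :: "nat \<Rightarrow> real set"
  assumes "finite I" "\<forall>i\<in>I. A i \<in> sets lborel \<and> bounded (A i)" "disjoint_family_on A I"
  shows "indep_vars (\<lambda>_. count_space UNIV) (\<lambda>i \<omega>. card (N \<omega> \<inter> A i)) I"
proof -
  from poisson have "\<forall>(I::nat set) (A::nat \<Rightarrow> real set). finite I \<longrightarrow>
        (\<forall>i\<in>I. A i \<in> sets lborel \<and> bounded (A i)) \<longrightarrow> disjoint_family_on A I \<longrightarrow>
        indep_vars (\<lambda>_. count_space UNIV) (\<lambda>i \<omega>. card (N \<omega> \<inter> A i)) I"
    unfolding poisson_point_process_def by (elim conjE)
  then show ?thesis
    using assms by simp
qed

definition cell_count :: "real \<Rightarrow> nat \<Rightarrow> 'a \<Rightarrow> nat" where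
  "cell_count a i \<omega> = card (N \<omega> \<inter> unit_cell a i)"

lemma cell_count_eq_0_iff:
  assumes "\<omega> \<in> space M"
  shows "cell_count a i \<omega> = 0 \<longleftrightarrow> N \<omega> \<inter> unit_cell a i = {}"
proof -
  have "finite (N \<omega> \<inter> unit_cell a i)"
    by (rule finite_subset[OF _ locally_finite[OF assms, of "a + i" "a + i + 1"]])
       (auto simp: unit_cell_def)
  then show ?thesis by (simp add: cell_count_def)
qed

lemma cell_count_measurable[measurable]: "cell_count a i \<in> measurable M (count_space UNIV)"
  unfolding cell_count_def by (rule count_measurable) (auto simp: unit_cell_def)

lemma prob_cell_count_eq_0: "prob {\<omega>\<in>space M. cell_count a i \<omega> = 0} = exp (- 1)"
  using prob_count[of "unit_cell a i" 0] by (simp add: cell_count_def unit_cell_def)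

lemma indep_cell_counts: "indep_vars (\<lambda>_. count_space UNIV) (cell_count a) UNIV"
proof -
  have "indep_vars (\<lambda>_. count_space UNIV) (cell_count a) J" if "finite J" for J
    unfolding cell_count_def
    by (rule indep_counts[OF that _ disjoint_family_on_mono[OF subset_UNIV disjoint_family_unit_cell]])
       (simp add: unit_cell_def)
  then show ?thesis
    unfolding indep_vars_def by (subst indep_sets_finite_index_sets) blast
qed

lemma prob_cell_pattern_ge:
  assumes "finite K"
  shows "exp (- real (card K)) \<le> prob {\<omega>\<in>space M. \<forall>i\<in>K. (cell_count a i \<omega> = 0) = pat i}"
proof (cases "K = {}")
  case True
  then show ?thesis by (simp add: prob_space)
next
  case False
  define E where "E i = {\<omega>\<in>space M. (cell_count a i \<omega> = 0) = pat i}" for i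
  have indep: "indep_events E K"
    unfolding E_def
    by (rule indep_eventsI_indep_vars[OF indep_vars_subset[OF indep_cell_counts]]) auto
  have "exp (- 1) \<le> prob (E i)" for i
  proof (cases "pat i")
    case True
    then show ?thesis using prob_cell_count_eq_0 by (simp add: E_def)
  next
    case False
    have "exp (1::real) \<ge> 2" using exp_ge_add_one_self[of 1] by simp
    then have "exp (- 1) \<le> 1 - exp (- 1::real)" by (simp add: exp_minus field_simps)
    also have "\<dots> = prob (space M - {\<omega>\<in>space M. cell_count a i \<omega> = 0})"
      using prob_cell_count_eq_0 by (subst prob_compl) simp_all
    also have "space M - {\<omega>\<in>space M. cell_count a i \<omega> = 0} = E i"
      using False by (auto simp: E_def)
    finally show ?thesis .
  qed
  then have "(\<Prod>i\<in>K. exp (- 1)) \<le> (\<Prod>i\<in>K. prob (E i))"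
    by (intro prod_mono) simp
  then have "exp (- real (card K)) \<le> (\<Prod>i\<in>K. prob (E i))"
    by (simp add: exp_of_nat_mult[symmetric])
  also have "(\<Prod>i\<in>K. prob (E i)) = prob (\<Inter>i\<in>K. E i)"
    by (rule conjunct2[OF indep[unfolded indep_events_def], rule_format, OF order_refl False assms, symmetric])
  also have "(\<Inter>i\<in>K. E i) = {\<omega>\<in>space M. \<forall>i\<in>K. (cell_count a i \<omega> = 0) = pat i}"
    using False by (auto simp: E_def)
  finally show ?thesis .
qed

lemma indep_cell_patterns:
  assumes "\<And>j. finite (K j)" and "disjoint_family K"
  shows "indep_events (\<lambda>j. {\<omega>\<in>space M. \<forall>i\<in>K j. (cell_count a i \<omega> = 0) = pat j i}) UNIV"
proof -
  have "indep_vars (\<lambda>j. PiM (K j) (\<lambda>_. count_space UNIV)) (\<lambda>j \<omega>. restrict (\<lambda>i. cell_count a i \<omega>) (K j)) UNIV"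
    by (rule indep_vars_restrict[OF indep_cell_counts]) (simp_all add: assms(2))
  then have "indep_events (\<lambda>j. {\<omega>\<in>space M. \<forall>i\<in>K j. (restrict (\<lambda>i. cell_count a i \<omega>) (K j) i = 0) = pat j i}) UNIV"
    by (rule indep_eventsI_indep_vars) (use assms(1) in measurable)
  then show ?thesis by simp
qed

definition good_block_event :: "real \<Rightarrow> nat \<Rightarrow> nat \<Rightarrow> 'a set" where
  "good_block_event a L j = {\<omega>\<in>space M. good_block L (a + real (j * (2 * L + 5))) (N \<omega>)}"

lemma good_block_event_eq_cell_pattern:
  fixes L :: nat
  defines "B \<equiv> 2 * L + 5"
  shows "good_block_event a L j =
    {\<omega>\<in>space M. \<forall>i\<in>{j * B..<j * B + B}. (cell_count a i \<omega> = 0) = (i < j * B + (L + 5))}"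
proof -
  have "good_block L (a + real (j * B)) (N \<omega>) \<longleftrightarrow>
      (\<forall>i\<in>{j * B..<j * B + B}. (cell_count a i \<omega> = 0) = (i < j * B + (L + 5)))"
    if "\<omega> \<in> space M" for \<omega>
    using cell_count_eq_0_iff[OF that] unit_cell_shift
    unfolding good_block_def B_def[symmetric] ball_atLeastLessThan_add by simp
  then show ?thesis
    unfolding good_block_event_def B_def by auto
qed

lemma prob_good_block_event_ge: "exp (- (2 * real L + 5)) \<le> prob (good_block_event a L j)"
  using prob_cell_pattern_ge[of "{j * (2 * L + 5)..<j * (2 * L + 5) + (2 * L + 5)}" a]
  unfolding good_block_event_eq_cell_pattern by simp

lemma indep_good_block_events: "indep_events (good_block_event a L) UNIV"
proof -
  define B where "B = 2 * L + 5"
  have "i div B = j" if "i \<in> {j * B..<j * B + B}" for i j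
    using that by (intro div_nat_eqI) (auto simp: B_def algebra_simps)
  then have "disjoint_family (\<lambda>j. {j * B..<j * B + B})"
    unfolding disjoint_family_on_def by blast
  then show ?thesis
    unfolding good_block_event_eq_cell_pattern B_def[symmetric]
    by (rule indep_cell_patterns[rotated]) simp
qed

lemma good_block_event_sets: "good_block_event a L j \<in> events"
  using indep_good_block_events[of a L] unfolding indep_events_def by blast

lemma prob_no_good_block_le:
  "prob (space M - (\<Union>j<J. good_block_event a L j)) \<le> exp (- (real J * exp (- (2 * real L + 5))))"
proof -
  have "indep_events (good_block_event a L) {..<J}"
    using indep_good_block_events[of a L] unfolding indep_events_def by blast
  then show ?thesis
    using prob_none_of_indep_events_le[of "good_block_event a L" "{..<J}"] prob_good_block_event_ge by simp
qed

end

definition scale_len :: "nat \<Rightarrow> nat" where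
  "scale_len k = nat \<lceil>ln (real k + 1) / 4\<rceil> + 1"

definition scale_blocks :: "nat \<Rightarrow> nat" where
  "scale_blocks k = nat \<lfloor>real k / (2 * real (scale_len k) + 5)\<rfloor>"

definition scale_start :: "nat \<Rightarrow> real" where
  "scale_start k = 3 * real k ^ 2 / 2"

lemma scale_len_bounds:
  "ln (real k + 1) / 4 + 1 \<le> real (scale_len k)" "real (scale_len k) \<le> ln (real k + 1) / 4 + 2"
proof -
  have "0 \<le> ln (real k + 1)" by simp
  then show "ln (real k + 1) / 4 + 1 \<le> real (scale_len k)" "real (scale_len k) \<le> ln (real k + 1) / 4 + 2"
    unfolding scale_len_def by linarith+
qed

lemma scale_blocks_bounds:
  "real k / (2 * real (scale_len k) + 5) - 1 \<le> real (scale_blocks k)"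
  "real (scale_blocks k) * (2 * real (scale_len k) + 5) \<le> real k"
proof -
  let ?D = "2 * real (scale_len k) + 5"
  have J: "real (scale_blocks k) = of_int \<lfloor>real k / ?D\<rfloor>"
    unfolding scale_blocks_def by simp
  then show "real k / ?D - 1 \<le> real (scale_blocks k)"
    by linarith
  have "real (scale_blocks k) \<le> real k / ?D"
    unfolding J by (rule of_int_floor_le)
  then show "real (scale_blocks k) * ?D \<le> real k"
    by (simp add: le_divide_eq)
qed

lemma eventually_exp_scale_blocks_le:
  "\<forall>\<^sub>F k in sequentially.
     exp (- (real (scale_blocks k) * exp (- (2 * real (scale_len k) + 5)))) \<le> inverse (real k ^ 2)"
proof -
  have "\<forall>\<^sub>F k in sequentially. 0 \<le> real k / (ln (real k + 1) / 2 + 9) - 1"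
    by real_asymp
  moreover have "\<forall>\<^sub>F k in sequentially.
      2 * ln (real k) \<le> (real k / (ln (real k + 1) / 2 + 9) - 1) * exp (- (ln (real k + 1) / 2 + 9))"
    by real_asymp
  ultimately show ?thesis
    using eventually_gt_at_top[of 0]
  proof eventually_elim
    case (elim k)
    define D where "D = 2 * real (scale_len k) + 5"
    define D' where "D' = ln (real k + 1) / 2 + 9"
    have D: "0 < D" "D \<le> D'"
      unfolding D_def D'_def using scale_len_bounds(2)[of k] by auto
    have "real k / D' - 1 \<le> real k / D - 1"
      using D by (simp add: frac_le)
    have "2 * ln (real k) \<le> (real k / D' - 1) * exp (- D')"
      using elim(2) unfolding D'_def .
    also have "\<dots> \<le> (real k / D - 1) * exp (- D)"
      using \<open>real k / D' - 1 \<le> real k / D - 1\<close> elim(1) D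
      by (intro mult_mono) (simp_all add: D'_def)
    also have "\<dots> \<le> real (scale_blocks k) * exp (- D)"
      using scale_blocks_bounds(1)[of k] unfolding D_def by simp
    finally have "exp (- (real (scale_blocks k) * exp (- D))) \<le> exp (- ln (real k ^ 2))"
      using elim by (simp add: ln_realpow)
    also have "\<dots> = inverse (real k ^ 2)"
      using elim by (simp add: exp_minus)
    finally show ?case
      unfolding D_def .
  qed
qed

lemma (in poisson_process) AE_eventually_good_block:
  "AE \<omega> in M. \<forall>\<^sub>F k in sequentially. \<exists>j<scale_blocks k.
     good_block (scale_len k) (scale_start k + real (j * (2 * scale_len k + 5))) (N \<omega>)"
proof -
  define F where "F k = space M - (\<Union>j<scale_blocks k. good_block_event (scale_start k) (scale_len k) j)" for k
  have F_sets: "F k \<in> events" for k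
    unfolding F_def by (intro sets.compl_sets sets.finite_UN) (simp_all add: good_block_event_sets)
  have "\<forall>\<^sub>F k in sequentially. norm (prob (F k)) \<le> inverse (real k ^ 2)"
    using eventually_exp_scale_blocks_le
  proof eventually_elim
    case (elim k)
    have "prob (F k) \<le> exp (- (real (scale_blocks k) * exp (- (2 * real (scale_len k) + 5))))"
      unfolding F_def by (rule prob_no_good_block_le)
    with elim show ?case
      by simp
  qed
  then have "summable (\<lambda>k. prob (F k))"
    by (rule summable_comparison_test_ev) (rule inverse_power_summable, simp)
  then have "AE \<omega> in M. \<forall>\<^sub>F k in sequentially. \<omega> \<in> space M - F k"
    by (intro borel_cantelli_AE1 F_sets) (simp_all add: less_top[symmetric])
  then show ?thesis
    by (rule eventually_mono) (auto simp: F_def good_block_event_def elim!: eventually_mono)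
qed

lemma scale_start_add_le:
  assumes "k < k'"
  shows "scale_start k + real k \<le> scale_start k'"
proof -
  have "scale_start k + real k \<le> scale_start (Suc k)"
    unfolding scale_start_def by (simp add: power2_eq_square algebra_simps)
  also have "\<dots> \<le> scale_start k'"
    unfolding scale_start_def using assms by (simp add: power_mono)
  finally show ?thesis .
qed

lemma scale_window_floor_sqrt:
  assumes "5 \<le> floor_sqrt n"
  shows "real n \<le> scale_start (floor_sqrt n)" "scale_start (floor_sqrt n) + floor_sqrt n \<le> 2 * real n"
proof -
  define k where "k = floor_sqrt n"
  have "n < (k + 1)\<^sup>2" "k\<^sup>2 \<le> n"
    unfolding k_def using Suc_floor_sqrt_power2_gt[of n] floor_sqrt_power2_le[of n] by simp_all
  then have "real n < real ((k + 1)\<^sup>2)" "real (k\<^sup>2) \<le> real n"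
    by (simp_all only: of_nat_less_iff of_nat_le_iff)
  then have n: "real n < real k * real k + 2 * real k + 1" "real k * real k \<le> real n"
    by (simp_all add: power2_eq_square algebra_simps)
  have "5 * real k \<le> real k * real k"
    using assms unfolding k_def[symmetric] by (intro mult_right_mono) auto
  then show "real n \<le> scale_start (floor_sqrt n)" "scale_start (floor_sqrt n) + floor_sqrt n \<le> 2 * real n"
    using n assms unfolding k_def[symmetric] scale_start_def power2_eq_square by linarith+
qed

lemma ln_le_scale_len:
  assumes "1 \<le> n" and "floor_sqrt n \<le> k"
  shows "ln (real n) / 8 \<le> real (scale_len k)"
proof -
  have "n < (Suc (floor_sqrt n))\<^sup>2"
    by (rule Suc_floor_sqrt_power2_gt)
  also have "\<dots> \<le> (k + 1)\<^sup>2"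
    using assms(2) by (simp add: power_mono)
  finally have "real n < real ((k + 1)\<^sup>2)"
    by (simp only: of_nat_less_iff)
  then have "ln (real n) < ln ((real k + 1)\<^sup>2)"
    using assms(1) by (simp add: add.commute)
  then have "ln (real n) < 2 * ln (real k + 1)"
    by (simp add: ln_realpow)
  then show ?thesis
    using scale_len_bounds(1)[of k] by simp
qed

lemma sqrt_scale_sequence:
  fixes y :: "nat \<Rightarrow> real"
  assumes k0: "5 \<le> k0" and y: "\<And>k. k0 \<le> k \<Longrightarrow> scale_start k + 1 \<le> y k \<and> y k < scale_start k + k"
  defines "xs \<equiv> \<lambda>n. y (max k0 (floor_sqrt n)) - 1 / (real n + 1)"
  shows "strict_mono xs" and "\<forall>\<^sub>F n in sequentially. real n \<le> xs n \<and> xs n \<le> 2 * real n"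
proof -
  define g where "g n = max k0 (floor_sqrt n)" for n
  have xs_window: "scale_start (g n) \<le> xs n \<and> xs n < scale_start (g n) + g n" for n
  proof -
    have "k0 \<le> g n"
      unfolding g_def by simp
    moreover have "0 < 1 / (real n + 1)" "1 / (real n + 1) \<le> 1"
      by (auto simp: field_simps)
    ultimately show ?thesis
      using y[of "g n"] unfolding xs_def g_def[symmetric] by linarith
  qed
  show "strict_mono xs"
  proof (rule strict_monoI_Suc)
    fix n
    have "g n \<le> g (Suc n)"
      unfolding g_def using mono_floor_sqrt'[of n "Suc n"] by auto
    then consider "g n = g (Suc n)" | "g n < g (Suc n)"
      by linarith
    then show "xs n < xs (Suc n)"
    proof cases
      case 1
      have "1 / (real (Suc n) + 1) < 1 / (real n + 1)"
        by (auto simp: field_simps)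
      then show ?thesis
        unfolding xs_def g_def[symmetric] 1 by simp
    next
      case 2
      then show ?thesis
        using scale_start_add_le[OF 2] xs_window[of n] xs_window[of "Suc n"] by linarith
    qed
  qed
  show "\<forall>\<^sub>F n in sequentially. real n \<le> xs n \<and> xs n \<le> 2 * real n"
    using eventually_ge_at_top[of "k0\<^sup>2"]
  proof eventually_elim
    case (elim n)
    then have "k0 \<le> floor_sqrt n"
      by (rule le_floor_sqrtI)
    then have "g n = floor_sqrt n"
      unfolding g_def by simp
    then show ?case
      using xs_window[of n] scale_window_floor_sqrt[of n] k0 \<open>k0 \<le> floor_sqrt n\<close> by simp
  qed
qed

lemma linear_growth_ratio_bounds:
  fixes x :: "nat \<Rightarrow> real"
  assumes "0 < c" and "\<forall>\<^sub>F n in sequentially. c * real n \<le> x n \<and> x n \<le> d * real n"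
  shows "filterlim x at_top sequentially"
    and "ereal c \<le> liminf (\<lambda>n. ereal (x n / real n))"
    and "limsup (\<lambda>n. ereal (x n / real n)) \<le> ereal d"
proof -
  have "filterlim (\<lambda>n. c * real n) at_top sequentially"
    using assms(1) by (intro filterlim_tendsto_pos_mult_at_top[OF tendsto_const] filterlim_real_sequentially)
  then show "filterlim x at_top sequentially"
    by (rule filterlim_at_top_mono) (use assms(2) in \<open>auto elim: eventually_mono\<close>)
  have "\<forall>\<^sub>F n in sequentially. c \<le> x n / real n \<and> x n / real n \<le> d"
    using assms(2) eventually_gt_at_top[of 0]
    by eventually_elim (simp add: field_simps)
  then show "ereal c \<le> liminf (\<lambda>n. ereal (x n / real n))"
    and "limsup (\<lambda>n. ereal (x n / real n)) \<le> ereal d"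
    by (intro Liminf_bounded Limsup_bounded; auto elim: eventually_mono)+
qed

lemma (in cutoff) good_block_in_window_step_profile:
  assumes fin: "\<And>a b. finite (P \<inter> {a..b})" and j: "j < scale_blocks k"
    and good: "good_block (scale_len k) (scale_start k + real (j * (2 * scale_len k + 5))) P"
  obtains y where "scale_start k + 1 \<le> y" "y < scale_start k + real k"
    "\<And>x l. y - 1 \<le> x \<Longrightarrow> x \<le> y \<Longrightarrow> l \<le> real (scale_len k) \<Longrightarrow>
       step_profile (potential ei es chi P) ei es x l"
proof -
  let ?L = "scale_len k"
  let ?b = "scale_start k + real (j * (2 * ?L + 5))"
  have L: "1 \<le> ?L"
    unfolding scale_len_def by simp
  have cell: "finite (P \<inter> unit_cell ?b (?L + 5))"
    by (rule finite_subset[OF _ fin[of "?b + ?L + 5" "?b + ?L + 6"]]) (auto simp: unit_cell_def)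
  obtain p where p: "?b + ?L + 5 \<le> p" "p < ?b + ?L + 6"
      "\<And>x l. p - 3 \<le> x \<Longrightarrow> x \<le> p - 2 \<Longrightarrow> l \<le> real ?L \<Longrightarrow>
         step_profile (potential ei es chi P) ei es x l"
    using good_block_step_profile[OF good L cell] by blast
  have "(j + 1) * (2 * ?L + 5) \<le> scale_blocks k * (2 * ?L + 5)"
    using j by (intro mult_right_mono) auto
  then have "real ((j + 1) * (2 * ?L + 5)) \<le> real (scale_blocks k * (2 * ?L + 5))"
    by (simp only: of_nat_le_iff)
  then have "?b + 2 * ?L + 5 \<le> scale_start k + real k"
    using scale_blocks_bounds(2)[of k] by (simp add: algebra_simps)
  moreover have "0 \<le> real (j * (2 * ?L + 5))"
    by simp
  ultimately have "scale_start k + 1 \<le> p - 2" "p - 2 < scale_start k + real k"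
    using p(1,2) by linarith+
  then show ?thesis
    by (rule that[of "p - 2"]) (auto intro: p(3))
qed

lemma (in cutoff) step_profile_sequence:
  assumes fin: "\<And>a b. finite (P \<inter> {a..b})" and c0: "c0 \<le> 1 / 16"
    and good: "\<forall>\<^sub>F k in sequentially. \<exists>j<scale_blocks k.
      good_block (scale_len k) (scale_start k + real (j * (2 * scale_len k + 5))) P"
  shows "\<exists>xs :: nat \<Rightarrow> real. strict_mono xs \<and> filterlim xs at_top sequentially \<and>
    (\<forall>n\<ge>1. step_profile (potential ei es chi P) ei es (xs n) (2 * c0 * ln (real n))) \<and>
    1 \<le> liminf (\<lambda>n. ereal (xs n / real n)) \<and> limsup (\<lambda>n. ereal (xs n / real n)) \<le> 2"
proof -
  define anchored where "anchored k y \<longleftrightarrow> scale_start k + 1 \<le> y \<and> y < scale_start k + k \<and>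
      (\<forall>x l. y - 1 \<le> x \<longrightarrow> x \<le> y \<longrightarrow> l \<le> real (scale_len k) \<longrightarrow>
        step_profile (potential ei es chi P) ei es x l)" for k y
  obtain k1 where k1: "\<And>k. k1 \<le> k \<Longrightarrow> \<exists>j<scale_blocks k.
      good_block (scale_len k) (scale_start k + real (j * (2 * scale_len k + 5))) P"
    using good unfolding eventually_sequentially by blast
  define k0 where "k0 = max k1 5"
  have "\<exists>y. anchored k y" if "k0 \<le> k" for k
  proof -
    have "k1 \<le> k"
      using that unfolding k0_def by simp
    then obtain j where "j < scale_blocks k"
      "good_block (scale_len k) (scale_start k + real (j * (2 * scale_len k + 5))) P"
      using k1 by blast
    then show ?thesis
      unfolding anchored_def by (rule good_block_in_window_step_profile[OF fin]) blast
  qed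
  then have "\<forall>k. \<exists>y. k0 \<le> k \<longrightarrow> anchored k y"
    by blast
  from choice[OF this] obtain y where y: "\<And>k. k0 \<le> k \<Longrightarrow> anchored k (y k)"
    by blast
  define xs where "xs n = y (max k0 (floor_sqrt n)) - 1 / (real n + 1)" for n
  have "5 \<le> k0"
    unfolding k0_def by simp
  note seq = sqrt_scale_sequence[OF this, of y, folded xs_def]
  have profile: "step_profile (potential ei es chi P) ei es (xs n) (2 * c0 * ln (real n))"
    if "1 \<le> n" for n
  proof -
    have "0 \<le> ln (real n)"
      using that by simp
    then have "2 * c0 * ln (real n) \<le> 2 * (1 / 16) * ln (real n)"
      using c0 by (intro mult_right_mono) simp_all
    also have "\<dots> = ln (real n) / 8"
      by simp
    also have "\<dots> \<le> scale_len (max k0 (floor_sqrt n))"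
      using that by (rule ln_le_scale_len) simp
    finally show ?thesis
      using y[of "max k0 (floor_sqrt n)"] unfolding xs_def anchored_def by (auto simp: field_simps)
  qed
  have "strict_mono xs" "\<forall>\<^sub>F n in sequentially. 1 * real n \<le> xs n \<and> xs n \<le> 2 * real n"
    using seq y unfolding anchored_def by auto
  with profile linear_growth_ratio_bounds[OF zero_less_one this(2)] show ?thesis
    by (intro exI[of _ xs]) (simp add: one_ereal_def[symmetric])
qed

theorem lemma5p3:
  fixes ei es :: real and chi :: "real \<Rightarrow> real"
    and M :: "'a measure" and N :: "'a \<Rightarrow> real set"
  assumes ei_pos: "0 < ei" and ei_es: "ei < es" and ratio: "es / ei > 2"
    and chi_cont: "continuous_on {0..} chi"
    and chi_range: "\<And>x. 0 \<le> x \<Longrightarrow> chi x \<in> {0..1}"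
    and chi_antimono: "\<And>x y. 0 \<le> x \<Longrightarrow> x \<le> y \<Longrightarrow> chi y \<le> chi x"
    and chi_one: "\<And>x. 0 \<le> x \<Longrightarrow> x \<le> 1 \<Longrightarrow> chi x = 1"
    and chi_zero: "\<And>x. 2 \<le> x \<Longrightarrow> chi x = 0"
    and ppp: "poisson_point_process M N"
  shows "\<exists>c0>0. AE \<omega> in M. \<exists>xs :: nat \<Rightarrow> real.
            strict_mono xs \<and> filterlim xs at_top sequentially \<and>
            (\<forall>n\<ge>1. (\<forall>x\<in>{xs n - 2 * c0 * ln n .. xs n}. potential ei es chi (N \<omega>) x = ei) \<and>
                    (\<forall>x\<in>{xs n + 2 .. xs n + 2 * c0 * ln n - 2}. potential ei es chi (N \<omega>) x = es) \<and>
                    mono_on {xs n - 2 * c0 * ln n .. xs n + 2 * c0 * ln n - 2}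
                            (potential ei es chi (N \<omega>))) \<and>
            1 \<le> liminf (\<lambda>n. ereal (xs n / real n)) \<and>
            limsup (\<lambda>n. ereal (xs n / real n)) \<le> 2"
proof -
  interpret cutoff ei es chi
    using ei_es chi_range chi_antimono chi_one chi_zero by unfold_locales
  have "prob_space M"
    using ppp unfolding poisson_point_process_def by (elim conjE)
  then interpret poisson_process M N
    using ppp by (intro poisson_process.intro poisson_process_axioms.intro)
  have "AE \<omega> in M. \<exists>xs :: nat \<Rightarrow> real. strict_mono xs \<and> filterlim xs at_top sequentially \<and>
      (\<forall>n\<ge>1. step_profile (potential ei es chi (N \<omega>)) ei es (xs n) (2 * (1 / 16) * ln (real n))) \<and>
      1 \<le> liminf (\<lambda>n. ereal (xs n / real n)) \<and> limsup (\<lambda>n. ereal (xs n / real n)) \<le> 2"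
    using AE_space AE_eventually_good_block
  proof eventually_elim
    case (elim \<omega>)
    show ?case
      by (rule step_profile_sequence[OF locally_finite[OF elim(1)] _ elim(2)]) simp
  qed
  then show ?thesis
    unfolding step_profile_def by (intro exI[of _ "1 / 16 :: real"] conjI) simp_all
qed

end
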